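(* Let $Y$ be a $\mathbb C$-vector space. Then the pairing $\langle\sum_{u\in M}A_ux^{-u},\sum_{u\in M}B_ux^u\rangle=\sum_uB_uA_u$ induces an isomorphism $\mathcal K_0(Y)\cong\mathrm{Hom}_{\mathbb C}(\mathcal W_0,Y)$.
   Context: Let $A=\{\mathbf a_1,\dots,\mathbf a_m\}\subseteq\mathbb Z^n$ be linearly independent over $\mathbb R$, with $\mathbf a_j=(a_{1j},\dots,a_{nj})$, and $\ell_1,\dots,\ell_m$ positive integers (part of a relation $\ell_0\mathbf a_0=\sum_j\ell_j\mathbf a_j$, $\ell_0=\sum_j\ell_j$, $\mathbf a_0\in\mathbb Z^n$, $\gcd(\ell_0,\dots,\ell_m)=1$). Let $f_0=\sum_{j=1}^m\ell_jx^{\mathbf a_j}$. Let $V$ be the real span of $A$, $V_{\mathbb Z}=V\cap\mathbb Z^n$, $C(A)$ the real cone generated by $A$, $M=V_{\mathbb Z}\cap C(A)$. Let $S_0$ be the $\mathbb C$-span of $\{x^u:u\in M\}$, $D_{i,0}=x_i\partial/\partial x_i+x_i\partial f_0/\partial x_i$ ($i=1,\dots,n$), and $\mathcal W_0=S_0/\sum_iD_{i,0}S_0$. For a $\mathbb C$-vector space $Y$ let $R_0(Y)$ be the set of formal sums $\xi=\sum_{u\in M}A_ux^{-u}$ with $A_u\in Y$, and define $D^*_{i,0}(\xi)=\sum_{v\in M}\big(v_iA_v+\sum_{j=1}^m\ell_ja_{ij}A_{v+\mathbf a_j}\big)x^{-v}$. Let $\mathcal K_0(Y)=\{\xi\in R_0(Y):D^*_{i,0}(\xi)=0\text{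 for }i=1,\dots,n\}$. *)

theory Defs
  imports "HOL-Analysis.Analysis"
begin

text \<open>Exponent vectors live in \<open>int ^ 'n\<close> (the lattice Z^n); the generators
  a_1..a_m are indexed by a finite type \<open>'m\<close>.\<close>

definition rvec :: "int ^ 'n \<Rightarrow> real ^ 'n" where
  "rvec u = (\<chi> i. real_of_int (u $ i))"

definition Vspan :: "('m::finite \<Rightarrow> int ^ 'n) \<Rightarrow> (real ^ 'n) set" where
  "Vspan a = span (range (\<lambda>j. rvec (a j)))"

definition coneA :: "('m::finite \<Rightarrow> int ^ 'n) \<Rightarrow> (real ^ 'n) set" where
  "coneA a = {(\<Sum>j\<in>UNIV. c j *\<^sub>R rvec (a j)) | c. \<forall>j. 0 \<le> c j}"

definition Mset :: "('m::finite \<Rightarrow> int ^ 'n) \<Rightarrow> (int ^ 'n) set" where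
  "Mset a = {u. rvec u \<in> Vspan a \<and> rvec u \<in> coneA a}"

text \<open>S_0: finite sums \<open>\<Sum> B_u x^u\<close> with u \<in> M, represented by coefficient functions.\<close>
definition S0 :: "('m::finite \<Rightarrow> int ^ 'n) \<Rightarrow> (int ^ 'n \<Rightarrow> complex) set" where
  "S0 a = {B. finite {u. B u \<noteq> 0} \<and> {u. B u \<noteq> 0} \<subseteq> Mset a}"

text \<open>D_{i,0} = x_i d/dx_i + x_i (d f_0/dx_i), f_0 = \<Sum>_j l_j x^{a_j}, acting on coefficients:
  coefficient of x^w in D_{i,0}(\<Sum> B_u x^u) is w_i B_w + \<Sum>_j l_j a_{ij} B_{w - a_j}.\<close>
definition Dop :: "('m::finite \<Rightarrow> int ^ 'n) \<Rightarrow> ('m \<Rightarrow> nat) \<Rightarrow> 'n \<Rightarrow>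
    (int ^ 'n \<Rightarrow> complex) \<Rightarrow> (int ^ 'n \<Rightarrow> complex)" where
  "Dop a l i B = (\<lambda>w. of_int (w $ i) * B w
      + (\<Sum>j\<in>UNIV. of_nat (l j) * of_int (a j $ i) * B (w - a j)))"

definition DS0 :: "('m::finite \<Rightarrow> int ^ 'n::finite) \<Rightarrow> ('m \<Rightarrow> nat) \<Rightarrow> (int ^ 'n \<Rightarrow> complex) set" where
  "DS0 a l = {(\<lambda>w. \<Sum>i\<in>UNIV. Dop a l i (B i) w) | B. \<forall>i. B i \<in> S0 a}"

text \<open>Hom_C(W_0, Y) with W_0 = S_0 / \<Sum>_i D_{i,0} S_0: C-linear maps on S_0 vanishing on
  \<Sum>_i D_{i,0} S_0 (only their values on S_0 matter).\<close>
definition HomW :: "('m::finite \<Rightarrow> int ^ 'n::finite) \<Rightarrow> ('m \<Rightarrow> nat) \<Rightarrow>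
    (complex \<Rightarrow> 'y::ab_group_add \<Rightarrow> 'y) \<Rightarrow> ((int ^ 'n \<Rightarrow> complex) \<Rightarrow> 'y) set" where
  "HomW a l sc = {\<phi>.
      (\<forall>B\<in>S0 a. \<forall>C\<in>S0 a. \<phi> (\<lambda>u. B u + C u) = \<phi> B + \<phi> C)
    \<and> (\<forall>c. \<forall>B\<in>S0 a. \<phi> (\<lambda>u. c * B u) = sc c (\<phi> B))
    \<and> (\<forall>B\<in>DS0 a l. \<phi> B = 0)}"

text \<open>R_0(Y): formal sums \<open>\<Sum>_{u\<in>M} A_u x^{-u}\<close>, as functions vanishing off M.\<close>
definition R0 :: "('m::finite \<Rightarrow> int ^ 'n) \<Rightarrow> (int ^ 'n \<Rightarrow> 'y::zero) set" where
  "R0 a = {\<xi>. \<forall>u. u \<notin> Mset a \<longrightarrow> \<xi> u = 0}"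

text \<open>Coefficient of x^{-v} in D^*_{i,0}(\<xi>).\<close>
definition Dstar :: "('m::finite \<Rightarrow> int ^ 'n) \<Rightarrow> ('m \<Rightarrow> nat) \<Rightarrow>
    (complex \<Rightarrow> 'y::ab_group_add \<Rightarrow> 'y) \<Rightarrow> 'n \<Rightarrow> (int ^ 'n \<Rightarrow> 'y) \<Rightarrow> int ^ 'n \<Rightarrow> 'y" where
  "Dstar a l sc i \<xi> v = sc (of_int (v $ i)) (\<xi> v)
      + (\<Sum>j\<in>UNIV. sc (of_nat (l j) * of_int (a j $ i)) (\<xi> (v + a j)))"

definition K0 :: "('m::finite \<Rightarrow> int ^ 'n::finite) \<Rightarrow> ('m \<Rightarrow> nat) \<Rightarrow>
    (complex \<Rightarrow> 'y::ab_group_add \<Rightarrow> 'y) \<Rightarrow> (int ^ 'n \<Rightarrow> 'y) set" where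
  "K0 a l sc = {\<xi> \<in> R0 a. \<forall>i. \<forall>v\<in>Mset a. Dstar a l sc i \<xi> v = 0}"

definition pairing :: "(complex \<Rightarrow> 'y::ab_group_add \<Rightarrow> 'y) \<Rightarrow> (int ^ 'n \<Rightarrow> 'y)
    \<Rightarrow> (int ^ 'n \<Rightarrow> complex) \<Rightarrow> 'y" where
  "pairing sc \<xi> B = (\<Sum>u\<in>{u. B u \<noteq> 0}. sc (B u) (\<xi> u))"

end

theory Submission
  imports Defs
begin

text \<open>
  A linear map on S_0 is determined by its values on the monomials x^u, u in M, so the pairing
  identifies Hom(S_0, Y) with R_0(Y) through xi_u = <xi, x^u>. Shifting the summation index by
  a_j shows that D*_i is the transpose of D_i for this pairing; hence <xi, -> kills the image of
  D_i on S_0 exactly when D*_i xi vanishes on M.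
\<close>

definition supp :: "('a \<Rightarrow> 'b::zero) \<Rightarrow> 'a set" where
  "supp B = {u. B u \<noteq> 0}"

definition monomial :: "int ^ 'n \<Rightarrow> int ^ 'n \<Rightarrow> complex" where
  "monomial v = (\<lambda>w. if w = v then 1 else 0)"

lemma supp_monomial [simp]: "supp (monomial v) = {v}"
  by (auto simp: supp_def monomial_def)

lemma supp_mult_subset: "supp (\<lambda>w. f w * B w :: 'b::mult_zero) \<subseteq> supp B"
  by (auto simp: supp_def)

lemma supp_shift: "supp (\<lambda>w::'a::group_add. B (w - d)) = (\<lambda>u. u + d) ` supp B"
  by (auto simp: supp_def image_iff) (metis diff_add_cancel)

lemma supp_add_subset: "supp (\<lambda>w. B w + C w :: 'b::monoid_add) \<subseteq> supp B \<union> supp C"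
  by (auto simp: supp_def)

lemma supp_sum_subset:
  "supp (\<lambda>w. \<Sum>i\<in>I. F i w :: 'b::comm_monoid_add) \<subseteq> (\<Union>i\<in>I. supp (F i))"
  by (auto simp: supp_def intro: ccontr)

lemma supp_Dop_subset:
  "supp (Dop a l i B) \<subseteq> supp B \<union> (\<Union>j. (\<lambda>u. u + a j) ` supp B)"
proof -
  have shifted: "supp (\<lambda>w. c * B (w - d)) \<subseteq> (\<lambda>u. u + d) ` supp B" for c d
    using supp_mult_subset[of "\<lambda>_. c" "\<lambda>w. B (w - d)"] supp_shift[of B d] by simp
  have "supp (Dop a l i B) \<subseteq> supp (\<lambda>w. of_int (w $ i) * B w)
      \<union> supp (\<lambda>w. \<Sum>j\<in>UNIV. of_nat (l j) * of_int (a j $ i) * B (w - a j))"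
    unfolding Dop_def by (rule supp_add_subset)
  also have "\<dots> \<subseteq> supp B \<union> (\<Union>j. supp (\<lambda>w. of_nat (l j) * of_int (a j $ i) * B (w - a j)))"
    by (rule Un_mono[OF supp_mult_subset supp_sum_subset[of _ UNIV]])
  also have "\<dots> \<subseteq> supp B \<union> (\<Union>j. (\<lambda>u. u + a j) ` supp B)"
    by (intro Un_mono order_refl UN_mono shifted)
  finally show ?thesis .
qed

lemma rvec_add: "rvec (u + v) = rvec u + rvec v"
  by (simp add: rvec_def vec_eq_iff)

lemma Mset_add_generator:
  assumes "v \<in> Mset a"
  shows "v + a j \<in> Mset a"
proof -
  from assms have span: "rvec v \<in> Vspan a" and cone: "rvec v \<in> coneA a"
    by (auto simp: Mset_def)
  have "rvec (v + a j) \<in> Vspan a"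
    using span unfolding rvec_add Vspan_def by (intro span_add[OF _ span_base]) auto
  moreover
  from cone obtain c where c: "rvec v = (\<Sum>k\<in>UNIV. c k *\<^sub>R rvec (a k))" "\<forall>k. 0 \<le> c k"
    by (auto simp: coneA_def)
  let ?c' = "\<lambda>k. c k + (if k = j then 1 else 0)"
  have "(if k = j then 1 else 0) *\<^sub>R rvec (a k) = (if k = j then rvec (a k) else 0)" for k
    by simp
  then have "rvec (v + a j) = (\<Sum>k\<in>UNIV. ?c' k *\<^sub>R rvec (a k))"
    unfolding rvec_add c by (simp add: scaleR_add_left sum.distrib)
  hence "rvec (v + a j) \<in> coneA a"
    unfolding coneA_def using c(2) by (intro CollectI exI[of _ ?c']) auto
  ultimately show ?thesis by (simp add: Mset_def)
qed

lemma S0_iff: "B \<in> S0 a \<longleftrightarrow> finite (supp B) \<and> supp B \<subseteq> Mset a"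
  by (simp add: S0_def supp_def)

lemma S0_finite_supp: "B \<in> S0 a \<Longrightarrow> finite (supp B)"
  by (simp add: S0_iff)

lemma monomial_in_S0: "v \<in> Mset a \<Longrightarrow> monomial v \<in> S0 a"
  by (simp add: S0_iff)

lemma S0_if_supp_subset:
  assumes "finite T" "T \<subseteq> Mset a" "supp B \<subseteq> T"
  shows "B \<in> S0 a"
  using assms finite_subset unfolding S0_iff by blast

lemma S0_sum:
  assumes "finite I" "\<forall>i\<in>I. F i \<in> S0 a"
  shows "(\<lambda>w. \<Sum>i\<in>I. F i w) \<in> S0 a"
  by (rule S0_if_supp_subset[OF _ _ supp_sum_subset]) (use assms in \<open>auto simp: S0_iff\<close>)

lemma Dop_in_S0:
  assumes "B \<in> S0 a"
  shows "Dop a l i B \<in> S0 a"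
  by (rule S0_if_supp_subset[OF _ _ supp_Dop_subset])
    (use assms Mset_add_generator in \<open>auto simp: S0_iff\<close>)

lemma Dop_in_DS0:
  assumes "B \<in> S0 a"
  shows "Dop a l i B \<in> DS0 a l"
proof -
  let ?B = "\<lambda>i'. if i' = i then B else (\<lambda>_. 0)"
  have "Dop a l i' (?B i') w = (if i' = i then Dop a l i B w else 0)" for i' w
    by (simp add: Dop_def)
  then have "Dop a l i B = (\<lambda>w. \<Sum>i'\<in>UNIV. Dop a l i' (?B i') w)"
    by simp
  moreover have "\<forall>i'. ?B i' \<in> S0 a"
    using assms by (simp add: S0_def)
  ultimately show ?thesis
    unfolding DS0_def mem_Collect_eq by (rule exI[of _ ?B, OF conjI])
qed

locale complex_vs = vector_space scale
  for scale :: "complex \<Rightarrow> 'y::ab_group_add \<Rightarrow> 'y" (infixr \<open>\<odot>\<close> 75)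
begin

lemma pairing_eq_sum_superset:
  assumes "finite T" "supp B \<subseteq> T"
  shows "pairing scale \<xi> B = (\<Sum>u\<in>T. B u \<odot> \<xi> u)"
  unfolding pairing_def
  by (rule sum.mono_neutral_left) (use assms in \<open>auto simp: supp_def\<close>)

lemma pairing_add:
  assumes "finite (supp B)" "finite (supp C)"
  shows "pairing scale \<xi> (\<lambda>u. B u + C u) = pairing scale \<xi> B + pairing scale \<xi> C"
proof -
  let ?T = "supp B \<union> supp C"
  have "finite ?T" using assms by simp
  then show ?thesis
    using supp_add_subset[of B C]
    by (simp add: pairing_eq_sum_superset[of ?T] scale_left_distrib sum.distrib)
qed

lemma pairing_sum:
  assumes "finite I" "\<forall>i\<in>I. finite (supp (F i))"
  shows "pairing scale \<xi> (\<lambda>w. \<Sum>i\<in>I. F i w) = (\<Sum>i\<in>I. pairing scale \<xi> (F i))"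
proof -
  let ?T = "\<Union>i\<in>I. supp (F i)"
  have fin: "finite ?T" using assms by simp
  have "pairing scale \<xi> (\<lambda>w. \<Sum>i\<in>I. F i w) = (\<Sum>u\<in>?T. (\<Sum>i\<in>I. F i u) \<odot> \<xi> u)"
    by (rule pairing_eq_sum_superset[OF fin supp_sum_subset])
  also have "\<dots> = (\<Sum>i\<in>I. \<Sum>u\<in>?T. F i u \<odot> \<xi> u)"
    by (simp add: scale_sum_left sum.swap[of _ ?T])
  also have "\<dots> = (\<Sum>i\<in>I. pairing scale \<xi> (F i))"
    by (rule sum.cong[OF refl], rule pairing_eq_sum_superset[symmetric]) (use fin in auto)
  finally show ?thesis .
qed

lemma pairing_mult: "pairing scale \<xi> (\<lambda>u. c * B u) = c \<odot> pairing scale \<xi> B"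
  by (cases "c = 0") (simp_all add: pairing_def scale_sum_right)

lemma pairing_weight:
  assumes "finite (supp B)"
  shows "pairing scale \<xi> (\<lambda>w. f w * B w) = pairing scale (\<lambda>u. f u \<odot> \<xi> u) B"
  using assms supp_mult_subset[of f B]
  by (simp add: pairing_eq_sum_superset[of "supp B"] mult.commute)

lemma pairing_shift: "pairing scale \<xi> (\<lambda>w. B (w - d)) = pairing scale (\<lambda>u. \<xi> (u + d)) B"
  unfolding pairing_def supp_shift[unfolded supp_def] by (simp add: sum.reindex inj_on_def)

lemma pairing_monomial: "pairing scale \<xi> (monomial u) = \<xi> u"
  by (subst pairing_eq_sum_superset[of "{u}"]) (simp_all add: monomial_def supp_def)

lemma pairing_add_left:
  "pairing scale (\<lambda>u. \<xi> u + \<eta> u) B = pairing scale \<xi> B + pairing scale \<eta> B"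
  by (simp add: pairing_def scale_right_distrib sum.distrib)

lemma pairing_scale_left: "pairing scale (\<lambda>u. c \<odot> \<xi> u) B = c \<odot> pairing scale \<xi> B"
  by (simp add: pairing_def scale_sum_right mult.commute)

lemma pairing_sum_left:
  "pairing scale (\<lambda>u. \<Sum>j\<in>J. \<xi> j u) B = (\<Sum>j\<in>J. pairing scale (\<xi> j) B)"
  by (simp add: pairing_def scale_sum_right sum.swap[of _ J])

lemma pairing_Dop_eq_pairing_Dstar:
  assumes fin: "finite (supp B)"
  shows "pairing scale \<xi> (Dop a l i B) = pairing scale (Dstar a l scale i \<xi>) B"
proof -
  let ?c = "\<lambda>j. of_nat (l j) * of_int (a j $ i) :: complex"
  have fin_shift: "finite (supp (\<lambda>w. ?c j * B (w - a j)))" for j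
    using fin supp_mult_subset[of "\<lambda>_. ?c j" "\<lambda>w. B (w - a j)"] supp_shift[of B "a j"]
    by (metis finite_imageI finite_subset)
  have fin_weight: "finite (supp (\<lambda>w. of_int (w $ i) * B w))"
    by (rule finite_subset[OF supp_mult_subset fin])
  have fin_sum: "finite (supp (\<lambda>w. \<Sum>j\<in>UNIV. ?c j * B (w - a j)))"
    by (rule finite_subset[OF supp_sum_subset]) (simp add: fin_shift)
  have "pairing scale \<xi> (Dop a l i B)
      = pairing scale \<xi> (\<lambda>w. of_int (w $ i) * B w)
        + pairing scale \<xi> (\<lambda>w. \<Sum>j\<in>UNIV. ?c j * B (w - a j))"
    unfolding Dop_def by (rule pairing_add[OF fin_weight fin_sum])
  also have "\<dots> = pairing scale (\<lambda>u. of_int (u $ i) \<odot> \<xi> u) B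
        + (\<Sum>j\<in>UNIV. ?c j \<odot> pairing scale (\<lambda>u. \<xi> (u + a j)) B)"
    by (simp add: pairing_weight[OF fin] pairing_sum fin_shift pairing_mult pairing_shift)
  also have "\<dots> = pairing scale (Dstar a l scale i \<xi>) B"
    unfolding Dstar_def by (simp add: pairing_add_left pairing_sum_left pairing_scale_left)
  finally show ?thesis .
qed

lemma pairing_K0_vanishes_on_DS0:
  assumes "\<xi> \<in> K0 a l scale" "F \<in> DS0 a l"
  shows "pairing scale \<xi> F = 0"
proof -
  from assms(2) obtain B where F: "F = (\<lambda>w. \<Sum>i\<in>UNIV. Dop a l i (B i) w)"
    and B: "\<forall>i. B i \<in> S0 a"
    by (auto simp: DS0_def)
  have B_fin: "finite (supp (B i))" for i
    using B S0_finite_supp by blast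
  have "pairing scale \<xi> (Dop a l i (B i)) = 0" for i
  proof -
    have "\<forall>u\<in>supp (B i). Dstar a l scale i \<xi> u = 0"
      using assms(1) B by (auto simp: K0_def S0_iff)
    then show ?thesis
      unfolding pairing_Dop_eq_pairing_Dstar[OF B_fin] by (simp add: pairing_def supp_def)
  qed
  moreover have "finite (supp (Dop a l i (B i)))" for i
    using B S0_finite_supp Dop_in_S0 by blast
  ultimately show ?thesis
    by (simp add: F pairing_sum)
qed

lemma pairing_K0_in_HomW:
  assumes "\<xi> \<in> K0 a l scale"
  shows "pairing scale \<xi> \<in> HomW a l scale"
  using pairing_K0_vanishes_on_DS0[OF assms]
  by (simp add: HomW_def pairing_add pairing_mult S0_finite_supp)

end

definition formal_sum_of ::
    "('m::finite \<Rightarrow> int ^ 'n) \<Rightarrow> ((int ^ 'n \<Rightarrow> complex) \<Rightarrow> 'y::zero) \<Rightarrow> int ^ 'n \<Rightarrow> 'y" where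
  "formal_sum_of a \<phi> u = (if u \<in> Mset a then \<phi> (monomial u) else 0)"

context complex_vs
begin

lemma HomW_zero:
  assumes "\<phi> \<in> HomW a l scale"
  shows "\<phi> (\<lambda>_. 0) = 0"
proof -
  have hom: "\<forall>c. \<forall>B\<in>S0 a. \<phi> (\<lambda>u. c * B u) = c \<odot> \<phi> B"
    using assms by (simp add: HomW_def)
  have "(\<lambda>_. 0) \<in> S0 a"
    by (simp add: S0_def)
  from bspec[OF spec[OF hom, of 0] this] show ?thesis
    by simp
qed

lemma HomW_sum:
  assumes "\<phi> \<in> HomW a l scale" "finite I" "\<forall>i\<in>I. F i \<in> S0 a"
  shows "\<phi> (\<lambda>w. \<Sum>i\<in>I. F i w) = (\<Sum>i\<in>I. \<phi> (F i))"
  using assms(2,3)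
proof (induction I rule: finite_induct)
  case empty
  then show ?case using HomW_zero[OF assms(1)] by simp
next
  case (insert i I)
  then have "(\<lambda>w. \<Sum>i\<in>I. F i w) \<in> S0 a" "F i \<in> S0 a"
    by (simp_all add: S0_sum)
  with insert assms(1) show ?case
    unfolding HomW_def by simp
qed

lemma HomW_eq_pairing_formal_sum_of:
  assumes phi: "\<phi> \<in> HomW a l scale" and B: "B \<in> S0 a"
  shows "\<phi> B = pairing scale (formal_sum_of a \<phi>) B"
proof -
  have fin: "finite (supp B)" and M: "supp B \<subseteq> Mset a"
    using B by (simp_all add: S0_iff)
  have "B = (\<lambda>w. \<Sum>u\<in>supp B. B u * monomial u w)"
    using fin by (auto simp: monomial_def supp_def fun_eq_iff if_distrib cong: if_cong)
  then have "\<phi> B = \<phi> (\<lambda>w. \<Sum>u\<in>supp B. B u * monomial u w)"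
    by (rule arg_cong)
  also have "\<dots> = (\<Sum>u\<in>supp B. \<phi> (\<lambda>w. B u * monomial u w))"
    by (rule HomW_sum[OF phi fin]) (use M in \<open>auto simp: S0_iff supp_def monomial_def\<close>)
  also have "\<dots> = (\<Sum>u\<in>supp B. B u \<odot> \<phi> (monomial u))"
  proof (rule sum.cong[OF refl])
    fix u
    assume "u \<in> supp B"
    then have "monomial u \<in> S0 a"
      using M monomial_in_S0 by blast
    then show "\<phi> (\<lambda>w. B u * monomial u w) = B u \<odot> \<phi> (monomial u)"
      using phi by (simp add: HomW_def)
  qed
  also have "\<dots> = pairing scale (formal_sum_of a \<phi>) B"
    using M by (auto simp: pairing_def supp_def formal_sum_of_def intro!: sum.cong)
  finally show ?thesis .
qed

lemma formal_sum_of_in_K0: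
  assumes phi: "\<phi> \<in> HomW a l scale"
  shows "formal_sum_of a \<phi> \<in> K0 a l scale"
  unfolding K0_def
proof (intro CollectI conjI allI ballI)
  show "formal_sum_of a \<phi> \<in> R0 a"
    by (simp add: R0_def formal_sum_of_def)
  fix i v
  assume v: "v \<in> Mset a"
  have "Dstar a l scale i (formal_sum_of a \<phi>) v
      = pairing scale (formal_sum_of a \<phi>) (Dop a l i (monomial v))"
    by (simp add: pairing_Dop_eq_pairing_Dstar pairing_monomial)
  also have "\<dots> = \<phi> (Dop a l i (monomial v))"
    using HomW_eq_pairing_formal_sum_of[OF phi Dop_in_S0[OF monomial_in_S0[OF v]]] by simp
  also have "\<dots> = 0"
    using phi Dop_in_DS0[OF monomial_in_S0[OF v]] by (simp add: HomW_def)
  finally show "Dstar a l scale i (formal_sum_of a \<phi>) v = 0" .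
qed

lemma R0_eq_formal_sum_of:
  assumes "\<xi> \<in> R0 a" "\<forall>B\<in>S0 a. pairing scale \<xi> B = \<phi> B"
  shows "\<xi> = formal_sum_of a \<phi>"
proof
  fix u
  show "\<xi> u = formal_sum_of a \<phi> u"
  proof (cases "u \<in> Mset a")
    case True
    then show ?thesis
      using assms(2) monomial_in_S0[OF True] pairing_monomial[of \<xi> u]
      by (simp add: formal_sum_of_def)
  next
    case False
    then show ?thesis
      using assms(1) by (simp add: R0_def formal_sum_of_def)
  qed
qed

end

theorem proposition2p9:
  fixes a :: "'m::finite \<Rightarrow> int ^ 'n::finite"
    and l :: "'m \<Rightarrow> nat"
    and a0 :: "int ^ 'n"
    and sc :: "complex \<Rightarrow> 'y::ab_group_add \<Rightarrow> 'y"
  assumes Y: "vector_space sc"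
    and inj: "inj (\<lambda>j. rvec (a j))"
    and indep: "independent (range (\<lambda>j. rvec (a j)))"
    and lpos: "\<forall>j. 0 < l j"
    and rel: "\<forall>i. int (\<Sum>j\<in>UNIV. l j) * a0 $ i = (\<Sum>j\<in>UNIV. int (l j) * a j $ i)"
    and gcd: "Gcd (insert (\<Sum>j\<in>UNIV. l j) (range l)) = 1"
  shows "(\<forall>\<xi>\<in>K0 a l sc. pairing sc \<xi> \<in> HomW a l sc)
       \<and> (\<forall>\<xi>\<in>K0 a l sc. \<forall>\<eta>\<in>K0 a l sc. \<forall>c. \<forall>B\<in>S0 a.
            pairing sc (\<lambda>u. sc c (\<xi> u) + \<eta> u) B
              = sc c (pairing sc \<xi> B) + pairing sc \<eta> B)
       \<and> (\<forall>\<phi>\<in>HomW a l sc. \<exists>!\<xi>. \<xi> \<in> K0 a l sc \<and>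
            (\<forall>B\<in>S0 a. pairing sc \<xi> B = \<phi> B))"
proof -
  interpret complex_vs sc
    using Y by (simp add: complex_vs_def)
  have "\<exists>!\<xi>. \<xi> \<in> K0 a l sc \<and> (\<forall>B\<in>S0 a. pairing sc \<xi> B = \<phi> B)"
    if "\<phi> \<in> HomW a l sc" for \<phi>
  proof (rule ex1I[of _ "formal_sum_of a \<phi>"])
    show "formal_sum_of a \<phi> \<in> K0 a l sc \<and> (\<forall>B\<in>S0 a. pairing sc (formal_sum_of a \<phi>) B = \<phi> B)"
      by (simp add: formal_sum_of_in_K0[OF that] HomW_eq_pairing_formal_sum_of[OF that])
    show "\<xi> = formal_sum_of a \<phi>"
      if "\<xi> \<in> K0 a l sc \<and> (\<forall>B\<in>S0 a. pairing sc \<xi> B = \<phi> B)" for \<xi>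
      using that by (intro R0_eq_formal_sum_of) (simp_all add: K0_def)
  qed
  then show ?thesis
    by (simp add: pairing_K0_in_HomW pairing_add_left pairing_scale_left)
qed

end
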